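(* Let $F,G:\mathcal C\rightrightarrows\mathcal D$ be functors between small categories. Their coequalizer $\mathrm{coeq}(F,G)$ in $\mathbf{Cat}$ is the following category: its set of objects is $Q_0$; its morphisms are those of the free category on the reflexive quiver $Q=(Q_0,Q_1)$, subject to the relations $[g]\circ[f]=[h]$ for $[f],[g],[h]\in Q_1$ whenever there exist composable morphisms $f'$, $g'$ of $\mathcal D$ with $[f']=[f]$, $[g']=[g]$ and $[g'\circ f']=[h]$ (i.e. representatives forming the boundary of a $2$-simplex of $N\mathcal D$).
   Context: $Q_0$ is the coequalizer in $\mathbf{Set}$ of the object maps $F_0,G_0:\mathrm{obj}\,\mathcal C\rightrightarrows\mathrm{obj}\,\mathcal D$ (the quotient of $\mathrm{obj}\,\mathcal D$ by the equivalence relation generated by $F(c)\sim G(c)$), and $Q_1$ is the coequalizer in $\mathbf{Set}$ of the morphism maps $F_1,G_1:\mathrm{mor}\,\mathcal C\rightrightarrows\mathrm{mor}\,\mathcal D$; classes are written $[x]$. Source, target and identity maps of $\mathcal D$ descend to make $Q=(Q_0,Q_1)$ a reflexive quiver (vertices $Q_0$, edges $Q_1$, source/target maps $Q_1\to Q_0$, distinguished loops the classes of identities); this is the $1$-truncation of the coequalizer of the nerves $NF,NG:N\mathcal C\rightrightarrows N\mathcal D$ in simplicial sets. The free category on a reflexive quiver has the vertices as objects and finite paths of non-distinguished edges as morphisms (distinguished loops becoming identities), composed by concatenation; "subject to the relations" means quotienting by the smallest congruence containing them. *)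

theory Defs
  imports Main
begin

text \<open>A small category: a set of objects, a set of morphisms, domain, codomain,
  identities and composition. Comp g f is g after f, defined when Cod f = Dom g.\<close>

record ('o, 'm) cat =
  Obj  :: "'o set"
  Mor  :: "'m set"
  Dom  :: "'m \<Rightarrow> 'o"
  Cod  :: "'m \<Rightarrow> 'o"
  Id   :: "'o \<Rightarrow> 'm"
  Comp :: "'m \<Rightarrow> 'm \<Rightarrow> 'm"

definition category :: "('o, 'm) cat \<Rightarrow> bool" where
  "category C \<longleftrightarrow>
     (\<forall>f\<in>Mor C. Dom C f \<in> Obj C \<and> Cod C f \<in> Obj C)
   \<and> (\<forall>a\<in>Obj C. Id C a \<in> Mor C \<and> Dom C (Id C a) = a \<and> Cod C (Id C a) = a)
   \<and> (\<forall>f\<in>Mor C. \<forall>g\<in>Mor C. Cod C f = Dom C g \<longrightarrow>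
         Comp C g f \<in> Mor C \<and> Dom C (Comp C g f) = Dom C f \<and> Cod C (Comp C g f) = Cod C g)
   \<and> (\<forall>f\<in>Mor C. Comp C f (Id C (Dom C f)) = f \<and> Comp C (Id C (Cod C f)) f = f)
   \<and> (\<forall>f\<in>Mor C. \<forall>g\<in>Mor C. \<forall>h\<in>Mor C. Cod C f = Dom C g \<longrightarrow> Cod C g = Dom C h \<longrightarrow>
         Comp C h (Comp C g f) = Comp C (Comp C h g) f)"

text \<open>A functor from C to D, given by its object map F0 and morphism map F1
  (only their values on the carriers of C matter).\<close>

definition "functor" :: "('a, 'b) cat \<Rightarrow> ('c, 'd) cat \<Rightarrow> ('a \<Rightarrow> 'c) \<Rightarrow> ('b \<Rightarrow> 'd) \<Rightarrow> bool" where
  "functor C D F0 F1 \<longleftrightarrow>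
     (\<forall>a\<in>Obj C. F0 a \<in> Obj D)
   \<and> (\<forall>f\<in>Mor C. F1 f \<in> Mor D \<and> Dom D (F1 f) = F0 (Dom C f) \<and> Cod D (F1 f) = F0 (Cod C f))
   \<and> (\<forall>a\<in>Obj C. F1 (Id C a) = Id D (F0 a))
   \<and> (\<forall>f\<in>Mor C. \<forall>g\<in>Mor C. Cod C f = Dom C g \<longrightarrow> F1 (Comp C g f) = Comp D (F1 g) (F1 f))"

text \<open>(E, Q0, Q1) is a coequalizer of the parallel pair F, G : C \<rightrightarrows> D in Cat,
  tested against all small categories whose object/morphism types are 'x / 'y
  (these type variables are universally quantified at the theorem level).\<close>

definition is_coequalizer ::
  "('a, 'b) cat \<Rightarrow> ('c, 'd) cat \<Rightarrow> ('a \<Rightarrow> 'c) \<Rightarrow> ('b \<Rightarrow> 'd) \<Rightarrow> ('a \<Rightarrow> 'c) \<Rightarrow> ('b \<Rightarrow> 'd)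
   \<Rightarrow> ('e, 'f) cat \<Rightarrow> ('c \<Rightarrow> 'e) \<Rightarrow> ('d \<Rightarrow> 'f) \<Rightarrow> ('x \<times> 'y) itself \<Rightarrow> bool" where
  "is_coequalizer C D F0 F1 G0 G1 E Q0 Q1 _ \<longleftrightarrow>
     category E \<and> functor D E Q0 Q1
   \<and> (\<forall>c\<in>Obj C. Q0 (F0 c) = Q0 (G0 c)) \<and> (\<forall>f\<in>Mor C. Q1 (F1 f) = Q1 (G1 f))
   \<and> (\<forall>(X :: ('x, 'y) cat) H0 H1.
        category X \<and> functor D X H0 H1
        \<and> (\<forall>c\<in>Obj C. H0 (F0 c) = H0 (G0 c)) \<and> (\<forall>f\<in>Mor C. H1 (F1 f) = H1 (G1 f))
        \<longrightarrow> (\<exists>K0 K1. functor E X K0 K1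
               \<and> (\<forall>d\<in>Obj D. K0 (Q0 d) = H0 d) \<and> (\<forall>f\<in>Mor D. K1 (Q1 f) = H1 f)
               \<and> (\<forall>K0' K1'. functor E X K0' K1'
                     \<and> (\<forall>d\<in>Obj D. K0' (Q0 d) = H0 d) \<and> (\<forall>f\<in>Mor D. K1' (Q1 f) = H1 f)
                     \<longrightarrow> (\<forall>e\<in>Obj E. K0' e = K0 e) \<and> (\<forall>m\<in>Mor E. K1' m = K1 m))))"

inductive objeq :: "('a, 'b) cat \<Rightarrow> ('c, 'd) cat \<Rightarrow> ('a \<Rightarrow> 'c) \<Rightarrow> ('a \<Rightarrow> 'c) \<Rightarrow> 'c \<Rightarrow> 'c \<Rightarrow> bool"
  for C D F0 G0 where
  oe_refl: "d \<in> Obj D \<Longrightarrow> objeq C D F0 G0 d d"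
| oe_gen:  "c \<in> Obj C \<Longrightarrow> objeq C D F0 G0 (F0 c) (G0 c)"
| oe_sym:  "objeq C D F0 G0 x y \<Longrightarrow> objeq C D F0 G0 y x"
| oe_trans: "objeq C D F0 G0 x y \<Longrightarrow> objeq C D F0 G0 y z \<Longrightarrow> objeq C D F0 G0 x z"

inductive moreq :: "('a, 'b) cat \<Rightarrow> ('c, 'd) cat \<Rightarrow> ('b \<Rightarrow> 'd) \<Rightarrow> ('b \<Rightarrow> 'd) \<Rightarrow> 'd \<Rightarrow> 'd \<Rightarrow> bool"
  for C D F1 G1 where
  me_refl: "f \<in> Mor D \<Longrightarrow> moreq C D F1 G1 f f"
| me_gen:  "f \<in> Mor C \<Longrightarrow> moreq C D F1 G1 (F1 f) (G1 f)"
| me_sym:  "moreq C D F1 G1 x y \<Longrightarrow> moreq C D F1 G1 y x"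
| me_trans: "moreq C D F1 G1 x y \<Longrightarrow> moreq C D F1 G1 y z \<Longrightarrow> moreq C D F1 G1 x z"

definition ocls :: "('a, 'b) cat \<Rightarrow> ('c, 'd) cat \<Rightarrow> ('a \<Rightarrow> 'c) \<Rightarrow> ('a \<Rightarrow> 'c) \<Rightarrow> 'c \<Rightarrow> 'c set" where
  "ocls C D F0 G0 d = {d'. objeq C D F0 G0 d d'}"

definition mcls :: "('a, 'b) cat \<Rightarrow> ('c, 'd) cat \<Rightarrow> ('b \<Rightarrow> 'd) \<Rightarrow> ('b \<Rightarrow> 'd) \<Rightarrow> 'd \<Rightarrow> 'd set" where
  "mcls C D F1 G1 f = {f'. moreq C D F1 G1 f f'}"

definition Q0 where "Q0 C D F0 G0 = ocls C D F0 G0 ` Obj D"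
definition Q1 where "Q1 C D F1 G1 = mcls C D F1 G1 ` Mor D"

definition qsrc where
  "qsrc C D F0 F1 G0 G1 e = ocls C D F0 G0 (Dom D (SOME f. f \<in> Mor D \<and> mcls C D F1 G1 f = e))"
definition qtgt where
  "qtgt C D F0 F1 G0 G1 e = ocls C D F0 G0 (Cod D (SOME f. f \<in> Mor D \<and> mcls C D F1 G1 f = e))"

definition distinguished where
  "distinguished C D F1 G1 e \<longleftrightarrow> (\<exists>d\<in>Obj D. e = mcls C D F1 G1 (Id D d))"

text \<open>A morphism of the free category is a triple (source, target, path), the path
  listing non-distinguished edges in order of traversal (first edge first);
  the empty path at a vertex is its identity.\<close>

type_synonym ('c, 'd) qpath = "'c set \<times> 'c set \<times> 'd set list"

fun path_ok where
  "path_ok C D F0 F1 G0 G1 a b [] \<longleftrightarrow> a \<in> Q0 C D F0 G0 \<and> b = a"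
| "path_ok C D F0 F1 G0 G1 a b (e # es) \<longleftrightarrow> a \<in> Q0 C D F0 G0 \<and> e \<in> Q1 C D F1 G1
     \<and> \<not> distinguished C D F1 G1 e \<and> qsrc C D F0 F1 G0 G1 e = a
     \<and> path_ok C D F0 F1 G0 G1 (qtgt C D F0 F1 G0 G1 e) b es"

definition valid_path :: "('a, 'b) cat \<Rightarrow> ('c, 'd) cat \<Rightarrow> ('a \<Rightarrow> 'c) \<Rightarrow> ('b \<Rightarrow> 'd) \<Rightarrow> ('a \<Rightarrow> 'c) \<Rightarrow> ('b \<Rightarrow> 'd)
    \<Rightarrow> ('c, 'd) qpath \<Rightarrow> bool" where
  "valid_path C D F0 F1 G0 G1 t = (case t of (a, b, p) \<Rightarrow> path_ok C D F0 F1 G0 G1 a b p)"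

definition epath where
  "epath C D F1 G1 e = (if distinguished C D F1 G1 e then [] else [e])"

inductive pcong :: "('a, 'b) cat \<Rightarrow> ('c, 'd) cat \<Rightarrow> ('a \<Rightarrow> 'c) \<Rightarrow> ('b \<Rightarrow> 'd) \<Rightarrow> ('a \<Rightarrow> 'c) \<Rightarrow> ('b \<Rightarrow> 'd)
    \<Rightarrow> ('c, 'd) qpath \<Rightarrow> ('c, 'd) qpath \<Rightarrow> bool"
  for C D F0 F1 G0 G1 where
  pc_refl: "valid_path C D F0 F1 G0 G1 t \<Longrightarrow> pcong C D F0 F1 G0 G1 t t"
| pc_rel: "\<lbrakk> f' \<in> Mor D; g' \<in> Mor D; Cod D f' = Dom D g' \<rbrakk> \<Longrightarrow>
     pcong C D F0 F1 G0 G1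
       (ocls C D F0 G0 (Dom D f'), ocls C D F0 G0 (Cod D g'),
          epath C D F1 G1 (mcls C D F1 G1 f') @ epath C D F1 G1 (mcls C D F1 G1 g'))
       (ocls C D F0 G0 (Dom D f'), ocls C D F0 G0 (Cod D g'),
          epath C D F1 G1 (mcls C D F1 G1 (Comp D g' f')))"
| pc_sym: "pcong C D F0 F1 G0 G1 s t \<Longrightarrow> pcong C D F0 F1 G0 G1 t s"
| pc_trans: "pcong C D F0 F1 G0 G1 s t \<Longrightarrow> pcong C D F0 F1 G0 G1 t u \<Longrightarrow> pcong C D F0 F1 G0 G1 s u"
| pc_comp: "pcong C D F0 F1 G0 G1 (a, b, p) (a, b, p') \<Longrightarrow> pcong C D F0 F1 G0 G1 (b, c, q) (b, c, q')
     \<Longrightarrow> pcong C D F0 F1 G0 G1 (a, c, p @ q) (a, c, p' @ q')"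

definition pcls where
  "pcls C D F0 F1 G0 G1 t = {t'. pcong C D F0 F1 G0 G1 t t'}"

definition coeq_cat :: "('a, 'b) cat \<Rightarrow> ('c, 'd) cat \<Rightarrow> ('a \<Rightarrow> 'c) \<Rightarrow> ('b \<Rightarrow> 'd) \<Rightarrow> ('a \<Rightarrow> 'c) \<Rightarrow> ('b \<Rightarrow> 'd)
    \<Rightarrow> ('c set, ('c, 'd) qpath set) cat" where
  "coeq_cat C D F0 F1 G0 G1 =
     \<lparr> Obj = Q0 C D F0 G0,
       Mor = pcls C D F0 F1 G0 G1 ` {t. valid_path C D F0 F1 G0 G1 t},
       Dom = (\<lambda>X. fst (SOME t. t \<in> X)),
       Cod = (\<lambda>X. fst (snd (SOME t. t \<in> X))),
       Id = (\<lambda>a. pcls C D F0 F1 G0 G1 (a, a, [])),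
       Comp = (\<lambda>Y X. case (SOME t. t \<in> X) of (a, _, p) \<Rightarrow>
                      (case (SOME t. t \<in> Y) of (_, c, q) \<Rightarrow> pcls C D F0 F1 G0 G1 (a, c, p @ q))) \<rparr>"

definition coeq_obj where
  "coeq_obj C D F0 G0 d = ocls C D F0 G0 d"

definition coeq_mor where
  "coeq_mor C D F0 F1 G0 G1 f =
     pcls C D F0 F1 G0 G1 (ocls C D F0 G0 (Dom D f), ocls C D F0 G0 (Cod D f),
                           epath C D F1 G1 (mcls C D F1 G1 f))"

end

theory Submission
  imports Defs
begin

text \<open>A functor H out of D that coequalizes F and G is constant on the classes of objects and
  morphisms, so it evaluates paths of Q in its target category; this evaluation respects the
  2-simplex relations because H preserves composition, and sends distinguished loops to
  identities because H preserves identities. The canonical functor from D sends f to the class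
  of the one-edge path [f]; its functoriality is exactly the 2-simplex relation, and it
  coequalizes F and G because [F f] = [G f] already in Q1. The factorization is unique because
  every path is the composite of its one-edge paths, which lie in the image of D.\<close>

lemma categoryI:
  assumes "\<And>f. f \<in> Mor C \<Longrightarrow> Dom C f \<in> Obj C \<and> Cod C f \<in> Obj C"
    and "\<And>a. a \<in> Obj C \<Longrightarrow> Id C a \<in> Mor C \<and> Dom C (Id C a) = a \<and> Cod C (Id C a) = a"
    and "\<And>f g. f \<in> Mor C \<Longrightarrow> g \<in> Mor C \<Longrightarrow> Cod C f = Dom C g \<Longrightarrow>
           Comp C g f \<in> Mor C \<and> Dom C (Comp C g f) = Dom C f \<and> Cod C (Comp C g f) = Cod C g"
    and "\<And>f. f \<in> Mor C \<Longrightarrow> Comp C f (Id C (Dom C f)) = f \<and> Comp C (Id C (Cod C f)) f = f"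
    and "\<And>f g h. f \<in> Mor C \<Longrightarrow> g \<in> Mor C \<Longrightarrow> h \<in> Mor C \<Longrightarrow> Cod C f = Dom C g \<Longrightarrow>
           Cod C g = Dom C h \<Longrightarrow> Comp C h (Comp C g f) = Comp C (Comp C h g) f"
  shows "category C"
  using assms unfolding category_def by blast

lemma category_Dom: "category C \<Longrightarrow> f \<in> Mor C \<Longrightarrow> Dom C f \<in> Obj C"
  unfolding category_def by blast

lemma category_Cod: "category C \<Longrightarrow> f \<in> Mor C \<Longrightarrow> Cod C f \<in> Obj C"
  unfolding category_def by blast

lemma category_Id:
  "category C \<Longrightarrow> a \<in> Obj C \<Longrightarrow> Id C a \<in> Mor C \<and> Dom C (Id C a) = a \<and> Cod C (Id C a) = a"
  unfolding category_def by blast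

lemma category_Comp:
  "category C \<Longrightarrow> f \<in> Mor C \<Longrightarrow> g \<in> Mor C \<Longrightarrow> Cod C f = Dom C g \<Longrightarrow>
     Comp C g f \<in> Mor C \<and> Dom C (Comp C g f) = Dom C f \<and> Cod C (Comp C g f) = Cod C g"
  unfolding category_def by blast

lemma category_Comp_Id_right: "category C \<Longrightarrow> f \<in> Mor C \<Longrightarrow> Comp C f (Id C (Dom C f)) = f"
  unfolding category_def by blast

lemma category_Comp_Id_left: "category C \<Longrightarrow> f \<in> Mor C \<Longrightarrow> Comp C (Id C (Cod C f)) f = f"
  unfolding category_def by blast

lemma category_Comp_assoc:
  "category C \<Longrightarrow> f \<in> Mor C \<Longrightarrow> g \<in> Mor C \<Longrightarrow> h \<in> Mor C \<Longrightarrow> Cod C f = Dom C g \<Longrightarrow>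
     Cod C g = Dom C h \<Longrightarrow> Comp C h (Comp C g f) = Comp C (Comp C h g) f"
  unfolding category_def by blast

lemma functorI:
  assumes "\<And>a. a \<in> Obj C \<Longrightarrow> F0 a \<in> Obj D"
    and "\<And>f. f \<in> Mor C \<Longrightarrow> F1 f \<in> Mor D \<and> Dom D (F1 f) = F0 (Dom C f) \<and> Cod D (F1 f) = F0 (Cod C f)"
    and "\<And>a. a \<in> Obj C \<Longrightarrow> F1 (Id C a) = Id D (F0 a)"
    and "\<And>f g. f \<in> Mor C \<Longrightarrow> g \<in> Mor C \<Longrightarrow> Cod C f = Dom C g \<Longrightarrow>
           F1 (Comp C g f) = Comp D (F1 g) (F1 f)"
  shows "functor C D F0 F1"
  using assms unfolding functor_def by blast

lemma functor_Obj: "functor C D F0 F1 \<Longrightarrow> a \<in> Obj C \<Longrightarrow> F0 a \<in> Obj D"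
  unfolding functor_def by blast

lemma functor_Mor:
  "functor C D F0 F1 \<Longrightarrow> f \<in> Mor C \<Longrightarrow>
     F1 f \<in> Mor D \<and> Dom D (F1 f) = F0 (Dom C f) \<and> Cod D (F1 f) = F0 (Cod C f)"
  unfolding functor_def by blast

lemma functor_Id: "functor C D F0 F1 \<Longrightarrow> a \<in> Obj C \<Longrightarrow> F1 (Id C a) = Id D (F0 a)"
  unfolding functor_def by blast

lemma functor_Comp:
  "functor C D F0 F1 \<Longrightarrow> f \<in> Mor C \<Longrightarrow> g \<in> Mor C \<Longrightarrow> Cod C f = Dom C g \<Longrightarrow>
     F1 (Comp C g f) = Comp D (F1 g) (F1 f)"
  unfolding functor_def by blast

locale parallel_functors =
  fixes C :: "('a, 'b) cat" and D :: "('c, 'd) cat"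
    and F0 G0 :: "'a \<Rightarrow> 'c" and F1 G1 :: "'b \<Rightarrow> 'd"
  assumes category_C: "category C" and category_D: "category D"
    and functor_F: "functor C D F0 F1" and functor_G: "functor C D G0 G1"
begin

abbreviation "oeq \<equiv> objeq C D F0 G0"
abbreviation "meq \<equiv> moreq C D F1 G1"
abbreviation "ocl \<equiv> ocls C D F0 G0"
abbreviation "mcl \<equiv> mcls C D F1 G1"
abbreviation "src \<equiv> qsrc C D F0 F1 G0 G1"
abbreviation "tgt \<equiv> qtgt C D F0 F1 G0 G1"
abbreviation "loop \<equiv> distinguished C D F1 G1"
abbreviation "epth \<equiv> epath C D F1 G1"
abbreviation "pok \<equiv> path_ok C D F0 F1 G0 G1"
abbreviation "pc \<equiv> pcong C D F0 F1 G0 G1"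
abbreviation "pcl \<equiv> pcls C D F0 F1 G0 G1"
abbreviation "E \<equiv> coeq_cat C D F0 F1 G0 G1"
abbreviation "Q \<equiv> coeq_mor C D F0 F1 G0 G1"

subsection \<open>The reflexive quiver\<close>

lemma ocls_eqI: "oeq x y \<Longrightarrow> ocl x = ocl y"
  unfolding ocls_def by (intro Collect_cong) (meson objeq.oe_sym objeq.oe_trans)

lemma ocls_eq_iff:
  assumes "x \<in> Obj D"
  shows "ocl x = ocl y \<longleftrightarrow> oeq x y"
proof
  assume "ocl x = ocl y"
  moreover have "x \<in> ocl x" unfolding ocls_def using assms by (simp add: objeq.oe_refl)
  ultimately show "oeq x y" unfolding ocls_def by (blast intro: objeq.oe_sym)
qed (rule ocls_eqI)

lemma mcls_eq_iff:
  assumes "f \<in> Mor D"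
  shows "mcl f = mcl g \<longleftrightarrow> meq f g"
proof
  assume "mcl f = mcl g"
  moreover have "f \<in> mcl f" unfolding mcls_def using assms by (simp add: moreq.me_refl)
  ultimately show "meq f g" unfolding mcls_def by (blast intro: moreq.me_sym)
next
  assume "meq f g"
  then show "mcl f = mcl g"
    unfolding mcls_def by (intro Collect_cong) (meson moreq.me_sym moreq.me_trans)
qed

lemma moreqD:
  "meq f g \<Longrightarrow> f \<in> Mor D \<and> g \<in> Mor D \<and> oeq (Dom D f) (Dom D g) \<and> oeq (Cod D f) (Cod D g)"
proof (induction rule: moreq.induct)
  case (me_refl f)
  then show ?case by (simp add: category_D category_Dom category_Cod objeq.oe_refl)
next
  case (me_gen f)
  then show ?case
    using functor_Mor[OF functor_F] functor_Mor[OF functor_G] category_C category_Dom category_Cod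
    by (metis objeq.oe_gen)
qed (meson objeq.oe_sym objeq.oe_trans)+

lemma some_ocls_rep: "d \<in> Obj D \<Longrightarrow> oeq (SOME d'. d' \<in> Obj D \<and> ocl d' = ocl d) d"
  by (rule someI2[of _ d]) (auto simp: ocls_eq_iff)

lemma some_mcls_rep: "f \<in> Mor D \<Longrightarrow> meq (SOME f'. f' \<in> Mor D \<and> mcl f' = mcl f) f"
  by (rule someI2[of _ f]) (auto simp: mcls_eq_iff)

lemma qsrc_mcls: "f \<in> Mor D \<Longrightarrow> src (mcl f) = ocl (Dom D f)"
  unfolding qsrc_def using moreqD[OF some_mcls_rep] ocls_eqI by blast

lemma qtgt_mcls: "f \<in> Mor D \<Longrightarrow> tgt (mcl f) = ocl (Cod D f)"
  unfolding qtgt_def using moreqD[OF some_mcls_rep] ocls_eqI by blast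

lemma distinguishedE:
  assumes "f \<in> Mor D" and "loop (mcl f)"
  obtains d where "d \<in> Obj D" "meq f (Id D d)" "oeq (Dom D f) d" "oeq (Cod D f) d"
proof -
  obtain d where d: "d \<in> Obj D" "mcl f = mcl (Id D d)"
    using assms(2) unfolding distinguished_def by blast
  then have "meq f (Id D d)" using mcls_eq_iff assms(1) by blast
  with d(1) show thesis using that moreqD category_Id[OF category_D d(1)] by metis
qed

lemma ocls_in_Q0: "d \<in> Obj D \<Longrightarrow> ocl d \<in> Q0 C D F0 G0"
  unfolding Q0_def by (rule imageI)

lemma path_ok_epath:
  assumes f: "f \<in> Mor D"
  shows "pok (ocl (Dom D f)) (ocl (Cod D f)) (epth (mcl f))"
proof -
  have ends: "ocl (Dom D f) \<in> Q0 C D F0 G0" "ocl (Cod D f) \<in> Q0 C D F0 G0"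
    using f by (simp_all add: ocls_in_Q0 category_D category_Dom category_Cod)
  show ?thesis
  proof (cases "loop (mcl f)")
    case True
    with f obtain d where "oeq (Dom D f) d" "oeq (Cod D f) d" by (rule distinguishedE)
    then have "ocl (Cod D f) = ocl (Dom D f)" by (metis ocls_eqI)
    with True ends show ?thesis by (simp add: epath_def)
  next
    case False
    moreover have "mcl f \<in> Q1 C D F1 G1" unfolding Q1_def using f by (rule imageI)
    ultimately show ?thesis using f ends by (simp add: epath_def qsrc_mcls qtgt_mcls)
  qed
qed

lemma path_ok_Q0: "pok a b p \<Longrightarrow> a \<in> Q0 C D F0 G0 \<and> b \<in> Q0 C D F0 G0"
  by (induction p arbitrary: a) auto

lemma path_ok_append: "pok a b p \<Longrightarrow> pok b c q \<Longrightarrow> pok a c (p @ q)"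
  by (induction p arbitrary: a) auto

lemma path_ok_Cons_iff: "pok a b (e # es) \<longleftrightarrow> pok a (tgt e) [e] \<and> pok (tgt e) b es"
  using path_ok_Q0 by auto

subsection \<open>The category coeq(F,G)\<close>

lemma valid_path_iff: "valid_path C D F0 F1 G0 G1 (a, b, p) \<longleftrightarrow> pok a b p"
  unfolding valid_path_def by simp

lemma pcong_path_ok:
  "pc s t \<Longrightarrow> \<exists>a b p q. s = (a, b, p) \<and> t = (a, b, q) \<and> pok a b p \<and> pok a b q"
proof (induction rule: pcong.induct)
  case (pc_refl t)
  then show ?case by (cases t) (auto simp: valid_path_iff)
next
  case (pc_rel f g)
  then have "Comp D g f \<in> Mor D" "Dom D (Comp D g f) = Dom D f" "Cod D (Comp D g f) = Cod D g"
    using category_Comp[OF category_D] by auto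
  with pc_rel show ?case
    using path_ok_epath[of f] path_ok_epath[of g] path_ok_epath[of "Comp D g f"] path_ok_append
    by auto
next
  case (pc_comp a b p p' c q q')
  then show ?case by (auto intro: path_ok_append)
qed blast+

lemma pcls_eqI: "pc s t \<Longrightarrow> pcl s = pcl t"
  unfolding pcls_def by (intro Collect_cong) (meson pcong.pc_sym pcong.pc_trans)

lemma some_pcls_rep:
  assumes "pok a b p"
  obtains p' where "(SOME t. t \<in> pcl (a, b, p)) = (a, b, p')" "pc (a, b, p) (a, b, p')"
proof -
  have "(a, b, p) \<in> pcl (a, b, p)"
    unfolding pcls_def using assms by (simp add: pcong.pc_refl valid_path_iff)
  then have "pc (a, b, p) (SOME t. t \<in> pcl (a, b, p))"
    unfolding pcls_def by (metis mem_Collect_eq someI)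
  with that show thesis using pcong_path_ok by fastforce
qed

lemma coeq_Obj: "Obj E = Q0 C D F0 G0"
  unfolding coeq_cat_def by simp

lemma coeq_Id: "Id E a = pcl (a, a, [])"
  unfolding coeq_cat_def by simp

lemma coeq_MorI: "pok a b p \<Longrightarrow> pcl (a, b, p) \<in> Mor E"
  unfolding coeq_cat_def by (auto simp: valid_path_iff)

lemma coeq_MorE:
  assumes "M \<in> Mor E"
  obtains a b p where "M = pcl (a, b, p)" "pok a b p"
  using assms unfolding coeq_cat_def by (auto simp: valid_path_def split: prod.splits)

lemma coeq_Dom: "pok a b p \<Longrightarrow> Dom E (pcl (a, b, p)) = a"
  by (rule some_pcls_rep) (auto simp: coeq_cat_def)

lemma coeq_Cod: "pok a b p \<Longrightarrow> Cod E (pcl (a, b, p)) = b"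
  by (rule some_pcls_rep) (auto simp: coeq_cat_def)

lemma coeq_Comp:
  assumes "pok a b p" and "pok b c q"
  shows "Comp E (pcl (b, c, q)) (pcl (a, b, p)) = pcl (a, c, p @ q)"
proof -
  obtain p' where p': "(SOME t. t \<in> pcl (a, b, p)) = (a, b, p')" "pc (a, b, p) (a, b, p')"
    using some_pcls_rep[OF assms(1)] .
  obtain q' where q': "(SOME t. t \<in> pcl (b, c, q)) = (b, c, q')" "pc (b, c, q) (b, c, q')"
    using some_pcls_rep[OF assms(2)] .
  have "Comp E (pcl (b, c, q)) (pcl (a, b, p)) = pcl (a, c, p' @ q')"
    unfolding coeq_cat_def using p'(1) q'(1) by simp
  also have "\<dots> = pcl (a, c, p @ q)"
    using pcong.pc_comp[OF p'(2) q'(2)] by (metis pcls_eqI pcong.pc_sym)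
  finally show ?thesis .
qed

lemma category_coeq_cat: "category E"
proof (rule categoryI)
  fix f assume "f \<in> Mor E"
  then obtain a b p where "f = pcl (a, b, p)" "pok a b p" by (rule coeq_MorE)
  moreover have "pok a a []" "pok b b []" using path_ok_Q0 calculation(2) by auto
  ultimately show "Dom E f \<in> Obj E \<and> Cod E f \<in> Obj E"
    and "Comp E f (Id E (Dom E f)) = f \<and> Comp E (Id E (Cod E f)) f = f"
    by (auto simp: coeq_Obj coeq_Dom coeq_Cod coeq_Id coeq_Comp)
next
  fix a assume "a \<in> Obj E"
  then show "Id E a \<in> Mor E \<and> Dom E (Id E a) = a \<and> Cod E (Id E a) = a"
    by (simp add: coeq_Obj coeq_Id coeq_Dom coeq_Cod coeq_MorI)
next
  fix f g assume "f \<in> Mor E" "g \<in> Mor E" "Cod E f = Dom E g"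
  then obtain a b p c q where "f = pcl (a, b, p)" "pok a b p" "g = pcl (b, c, q)" "pok b c q"
    by (elim coeq_MorE) (auto simp: coeq_Dom coeq_Cod)
  then show "Comp E g f \<in> Mor E \<and> Dom E (Comp E g f) = Dom E f \<and> Cod E (Comp E g f) = Cod E g"
    by (simp add: coeq_Comp coeq_Dom coeq_Cod coeq_MorI path_ok_append)
next
  fix f g h assume "f \<in> Mor E" "g \<in> Mor E" "h \<in> Mor E" "Cod E f = Dom E g" "Cod E g = Dom E h"
  then obtain a b p c q d r where "f = pcl (a, b, p)" "pok a b p" "g = pcl (b, c, q)" "pok b c q"
      "h = pcl (c, d, r)" "pok c d r"
    by (elim coeq_MorE) (auto simp: coeq_Dom coeq_Cod)
  then show "Comp E h (Comp E g f) = Comp E (Comp E h g) f"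
    by (simp add: coeq_Comp path_ok_append)
qed

lemma functor_coeq: "functor D E (coeq_obj C D F0 G0) Q"
proof (rule functorI)
  fix d assume "d \<in> Obj D"
  then show "coeq_obj C D F0 G0 d \<in> Obj E"
    by (auto simp: coeq_Obj coeq_obj_def Q0_def)
  have "loop (mcl (Id D d))" unfolding distinguished_def using \<open>d \<in> Obj D\<close> by blast
  then show "Q (Id D d) = Id E (coeq_obj C D F0 G0 d)"
    using category_Id[OF category_D \<open>d \<in> Obj D\<close>]
    by (simp add: coeq_mor_def coeq_Id coeq_obj_def epath_def)
next
  fix f assume "f \<in> Mor D"
  then show "Q f \<in> Mor E \<and> Dom E (Q f) = coeq_obj C D F0 G0 (Dom D f)
      \<and> Cod E (Q f) = coeq_obj C D F0 G0 (Cod D f)"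
    by (simp add: coeq_mor_def path_ok_epath coeq_MorI coeq_Dom coeq_Cod coeq_obj_def)
next
  fix f g assume fg: "f \<in> Mor D" "g \<in> Mor D" "Cod D f = Dom D g"
  then have gf: "Dom D (Comp D g f) = Dom D f" "Cod D (Comp D g f) = Cod D g"
    using category_Comp[OF category_D] by auto
  have "Comp E (Q g) (Q f) = pcl (ocl (Dom D f), ocl (Cod D g), epth (mcl f) @ epth (mcl g))"
    using fg path_ok_epath[of f] path_ok_epath[of g] by (simp add: coeq_mor_def coeq_Comp)
  also have "\<dots> = pcl (ocl (Dom D f), ocl (Cod D g), epth (mcl (Comp D g f)))"
    by (rule pcls_eqI) (rule pcong.pc_rel[OF fg])
  finally show "Q (Comp D g f) = Comp E (Q g) (Q f)"
    using gf by (simp add: coeq_mor_def)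
qed

lemma coeq_obj_coequalizes: "c \<in> Obj C \<Longrightarrow> coeq_obj C D F0 G0 (F0 c) = coeq_obj C D F0 G0 (G0 c)"
  unfolding coeq_obj_def by (rule ocls_eqI) (rule objeq.oe_gen)

lemma coeq_mor_coequalizes: "f \<in> Mor C \<Longrightarrow> Q (F1 f) = Q (G1 f)"
proof -
  assume "f \<in> Mor C"
  then have FG: "meq (F1 f) (G1 f)" by (rule moreq.me_gen)
  then have "mcl (F1 f) = mcl (G1 f)" by (simp add: mcls_eq_iff moreqD)
  moreover have "ocl (Dom D (F1 f)) = ocl (Dom D (G1 f))" "ocl (Cod D (F1 f)) = ocl (Cod D (G1 f))"
    using moreqD[OF FG] ocls_eqI by auto
  ultimately show ?thesis by (simp add: coeq_mor_def)
qed

end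

subsection \<open>The universal property\<close>

locale coequalizing_functor = parallel_functors C D F0 G0 F1 G1
  for C :: "('a, 'b) cat" and D :: "('c, 'd) cat"
    and F0 G0 :: "'a \<Rightarrow> 'c" and F1 G1 :: "'b \<Rightarrow> 'd" +
  fixes X :: "('x, 'y) cat" and H0 :: "'c \<Rightarrow> 'x" and H1 :: "'d \<Rightarrow> 'y"
  assumes category_X: "category X" and functor_H: "functor D X H0 H1"
    and H0_coequalizes: "\<forall>c\<in>Obj C. H0 (F0 c) = H0 (G0 c)"
    and H1_coequalizes: "\<forall>f\<in>Mor C. H1 (F1 f) = H1 (G1 f)"
begin

definition K0 :: "'c set \<Rightarrow> 'x" where
  "K0 A = H0 (SOME d. d \<in> Obj D \<and> ocl d = A)"

definition edge_mor :: "'d set \<Rightarrow> 'y" where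
  "edge_mor e = H1 (SOME f. f \<in> Mor D \<and> mcl f = e)"

fun eval :: "'c set \<Rightarrow> 'd set list \<Rightarrow> 'y" where
  "eval a [] = Id X (K0 a)"
| "eval a (e # es) = Comp X (eval (tgt e) es) (edge_mor e)"

definition eval_qpath :: "('c, 'd) qpath \<Rightarrow> 'y" where
  "eval_qpath t = (case t of (a, _, p) \<Rightarrow> eval a p)"

definition K1 :: "('c, 'd) qpath set \<Rightarrow> 'y" where
  "K1 M = eval_qpath (SOME t. t \<in> M)"

lemma H0_objeq: "oeq x y \<Longrightarrow> H0 x = H0 y"
  by (induction rule: objeq.induct) (auto simp: H0_coequalizes)

lemma H1_moreq: "meq f g \<Longrightarrow> H1 f = H1 g"
  by (induction rule: moreq.induct) (auto simp: H1_coequalizes)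

lemma K0_ocls: "d \<in> Obj D \<Longrightarrow> K0 (ocl d) = H0 d"
  unfolding K0_def by (rule H0_objeq[OF some_ocls_rep])

lemma edge_mor_mcls: "f \<in> Mor D \<Longrightarrow> edge_mor (mcl f) = H1 f"
  unfolding edge_mor_def by (rule H1_moreq[OF some_mcls_rep])

lemma edge_mor_Mor:
  assumes "pok a b (e # es)"
  shows "edge_mor e \<in> Mor X \<and> Dom X (edge_mor e) = K0 a \<and> Cod X (edge_mor e) = K0 (tgt e)"
proof -
  from assms obtain f where f: "f \<in> Mor D" "e = mcl f" and "a = ocl (Dom D f)"
    by (auto simp: Q1_def qsrc_mcls)
  with functor_Mor[OF functor_H f(1)] show ?thesis
    by (simp add: edge_mor_mcls qtgt_mcls K0_ocls category_D category_Dom category_Cod)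
qed

lemma eval_Mor: "pok a b p \<Longrightarrow> eval a p \<in> Mor X \<and> Dom X (eval a p) = K0 a \<and> Cod X (eval a p) = K0 b"
proof (induction p arbitrary: a)
  case Nil
  then obtain d where "d \<in> Obj D" "a = ocl d" "b = a" by (auto simp: Q0_def)
  then show ?case
    using category_Id[OF category_X] functor_Obj[OF functor_H] by (simp add: K0_ocls)
next
  case (Cons e es)
  with edge_mor_Mor[OF Cons.prems] show ?case
    using category_Comp[OF category_X] by simp
qed

lemma eval_append: "pok a b p \<Longrightarrow> pok b c q \<Longrightarrow> eval a (p @ q) = Comp X (eval b q) (eval a p)"
proof (induction p arbitrary: a)
  case Nil
  then have "b = a" by simp
  with eval_Mor[OF Nil(2)] show ?case
    using category_Comp_Id_right[OF category_X, of "eval b q"] by simp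
next
  case (Cons e es)
  then have es: "pok (tgt e) b es" by simp
  have "eval a ((e # es) @ q) = Comp X (Comp X (eval b q) (eval (tgt e) es)) (edge_mor e)"
    using Cons.IH[OF es Cons.prems(2)] by simp
  also have "\<dots> = Comp X (eval b q) (Comp X (eval (tgt e) es) (edge_mor e))"
    using category_Comp_assoc[OF category_X] edge_mor_Mor[OF Cons.prems(1)]
      eval_Mor[OF es] eval_Mor[OF Cons.prems(2)]
    by metis
  finally show ?case by simp
qed

lemma eval_epath: "f \<in> Mor D \<Longrightarrow> eval (ocl (Dom D f)) (epth (mcl f)) = H1 f"
proof (cases "loop (mcl f)")
  case True
  assume f: "f \<in> Mor D"
  obtain d where d: "d \<in> Obj D" "meq f (Id D d)" "oeq (Dom D f) d"
    using distinguishedE[OF f True] by metis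
  then have "H1 f = Id X (H0 (Dom D f))"
    using H1_moreq functor_Id[OF functor_H] H0_objeq by metis
  with True f show ?thesis by (simp add: epath_def K0_ocls category_D category_Dom)
next
  case False
  assume f: "f \<in> Mor D"
  with False have "eval (ocl (Dom D f)) (epth (mcl f)) = Comp X (Id X (H0 (Cod D f))) (H1 f)"
    by (simp add: epath_def edge_mor_mcls qtgt_mcls K0_ocls category_D category_Cod)
  also have "\<dots> = H1 f"
    using functor_Mor[OF functor_H f] category_Comp_Id_left[OF category_X] by metis
  finally show ?thesis .
qed

lemma eval_qpath_pcong: "pc s t \<Longrightarrow> eval_qpath s = eval_qpath t"
proof (induction rule: pcong.induct)
  case (pc_rel f g)
  then have gf: "Comp D g f \<in> Mor D" "Dom D (Comp D g f) = Dom D f"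
    using category_Comp[OF category_D] by auto
  have "eval (ocl (Dom D f)) (epth (mcl f) @ epth (mcl g)) = Comp X (H1 g) (H1 f)"
    using eval_append[OF path_ok_epath[OF pc_rel(1)] path_ok_epath[OF pc_rel(2), folded pc_rel(3)]]
    by (simp add: eval_epath pc_rel)
  also have "\<dots> = H1 (Comp D g f)"
    using functor_Comp[OF functor_H pc_rel] by simp
  finally show ?case using eval_epath[OF gf(1)] gf(2) by (simp add: eval_qpath_def)
next
  case (pc_comp a b p p' c q q')
  then show ?case
    using pcong_path_ok[OF pc_comp(1)] pcong_path_ok[OF pc_comp(2)]
    by (auto simp: eval_qpath_def eval_append)
qed simp_all

lemma K1_pcls: "pok a b p \<Longrightarrow> K1 (pcl (a, b, p)) = eval a p"
  by (rule some_pcls_rep) (auto simp: K1_def dest: eval_qpath_pcong simp: eval_qpath_def)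

lemma functor_K: "functor E X K0 K1"
proof (rule functorI)
  fix A assume "A \<in> Obj E"
  then show "K0 A \<in> Obj X"
    using functor_Obj[OF functor_H] by (auto simp: coeq_Obj Q0_def K0_ocls)
next
  fix M assume "M \<in> Mor E"
  then show "K1 M \<in> Mor X \<and> Dom X (K1 M) = K0 (Dom E M) \<and> Cod X (K1 M) = K0 (Cod E M)"
    by (elim coeq_MorE) (simp add: K1_pcls coeq_Dom coeq_Cod eval_Mor)
next
  fix A assume "A \<in> Obj E"
  then show "K1 (Id E A) = Id X (K0 A)" by (simp add: coeq_Obj coeq_Id K1_pcls)
next
  fix M N assume "M \<in> Mor E" "N \<in> Mor E" "Cod E M = Dom E N"
  then obtain a b p c q where "M = pcl (a, b, p)" "pok a b p" "N = pcl (b, c, q)" "pok b c q"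
    by (elim coeq_MorE) (auto simp: coeq_Dom coeq_Cod)
  then show "K1 (Comp E N M) = Comp X (K1 N) (K1 M)"
    by (simp add: coeq_Comp K1_pcls path_ok_append eval_append)
qed

lemma K_factorizes:
  "(\<forall>d\<in>Obj D. K0 (coeq_obj C D F0 G0 d) = H0 d) \<and> (\<forall>f\<in>Mor D. K1 (Q f) = H1 f)"
  by (auto simp: coeq_obj_def coeq_mor_def K0_ocls K1_pcls path_ok_epath eval_epath)

lemma K_unique:
  assumes K': "functor E X K0' K1'"
    and K'_obj: "\<forall>d\<in>Obj D. K0' (coeq_obj C D F0 G0 d) = H0 d"
    and K'_mor: "\<forall>f\<in>Mor D. K1' (Q f) = H1 f"
  shows "(\<forall>A\<in>Obj E. K0' A = K0 A) \<and> (\<forall>M\<in>Mor E. K1' M = K1 M)"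
proof -
  have K0': "\<forall>A\<in>Obj E. K0' A = K0 A"
    using K'_obj by (auto simp: coeq_Obj Q0_def coeq_obj_def K0_ocls)
  have "K1' (pcl (a, b, p)) = eval a p" if "pok a b p" for a b p
    using that
  proof (induction p arbitrary: a)
    case Nil
    then show ?case using functor_Id[OF K'] K0' by (simp add: coeq_Obj coeq_Id)
  next
    case (Cons e es)
    then have e: "pok a (tgt e) [e]" and es: "pok (tgt e) b es"
      using path_ok_Cons_iff by blast+
    from Cons.prems obtain f where f: "f \<in> Mor D" "e = mcl f"
      by (auto simp: Q1_def)
    with e have "Q f = pcl (a, tgt e, [e])"
      by (simp add: coeq_mor_def qsrc_mcls qtgt_mcls epath_def)
    moreover have "pcl (a, b, e # es) = Comp E (pcl (tgt e, b, es)) (pcl (a, tgt e, [e]))"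
      using coeq_Comp[OF e es] by simp
    ultimately have "K1' (pcl (a, b, e # es)) = Comp X (K1' (pcl (tgt e, b, es))) (K1' (Q f))"
      using functor_Comp[OF K' coeq_MorI[OF e] coeq_MorI[OF es]] coeq_Cod[OF e] coeq_Dom[OF es]
      by simp
    then show ?case using Cons.IH[OF es] K'_mor f by (simp add: edge_mor_mcls)
  qed
  then have "\<forall>M\<in>Mor E. K1' M = K1 M"
    by (auto elim: coeq_MorE simp: K1_pcls)
  with K0' show ?thesis by blast
qed

end

theorem mainTheorem17:
  fixes C :: "('a, 'b) cat" and D :: "('c, 'd) cat"
    and F0 G0 :: "'a \<Rightarrow> 'c" and F1 G1 :: "'b \<Rightarrow> 'd"
  assumes "category C" and "category D"
    and "functor C D F0 F1" and "functor C D G0 G1"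
  shows "is_coequalizer C D F0 F1 G0 G1 (coeq_cat C D F0 F1 G0 G1)
           (coeq_obj C D F0 G0) (coeq_mor C D F0 F1 G0 G1) TYPE('x \<times> 'y)"
proof -
  interpret parallel_functors C D F0 G0 F1 G1
    using assms by unfold_locales
  show ?thesis
    unfolding is_coequalizer_def
  proof (intro conjI allI impI, goal_cases)
    case (5 X H0 H1)
    then interpret coequalizing_functor C D F0 G0 F1 G1 X H0 H1
      by unfold_locales auto
    show ?case using functor_K K_factorizes K_unique by blast
  qed (use category_coeq_cat functor_coeq coeq_obj_coequalizes coeq_mor_coequalizes in auto)
qed

end
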